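(* Let $h:\mathbb{R}\to\mathbb{R}$ be a smooth function with $h(T)=\pi/2$ for $T\le 0$, $0<h(T)<\pi/2$ for $0<T<1$, and $h(T)=0$ for $T\ge 1$, and let $g(x)=\tan\bigl(h(x)\bigr)$ for $0<x<1$. Assume $g'''(x)<0$ for all $0<x<1$. Then $g''(x)>0$ and $g'(x)<0$ for $0<x<1$, and $$\lim_{x\to 1_-}\frac{g'(x)}{g(x)}=-\infty.$$ *)

theory Defs
  imports "HOL-Analysis.Analysis"
begin

definition smooth_real :: "(real \<Rightarrow> real) \<Rightarrow> bool" where
  "smooth_real f \<longleftrightarrow> (\<forall>n x. ((deriv ^^ n) f) differentiable (at x))"

end

theory Submission
  imports Defs "HOL-Real_Asymp.Real_Asymp"
begin

text \<open>
  On \<open>(0, \<infinity>)\<close> we have \<open>cos h \<noteq> 0\<close>, so \<open>g = tan \<circ> h\<close> is three times differentiable there,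
  with \<open>g' = h' (1 + g\<^sup>2)\<close>. Since \<open>g = 0\<close> on \<open>[1, \<infinity>)\<close>, the function \<open>g\<close> and its first two
  derivatives vanish at \<open>1\<close>. Integrating \<open>g''' < 0\<close> backwards from \<open>1\<close> gives \<open>g'' > 0\<close>, so \<open>g'\<close>
  is strictly increasing and hence negative on \<open>(0, 1)\<close>. By the mean value theorem
  \<open>g x = -(1 - x) g'(z) < -(1 - x) g'(x)\<close> for some \<open>z \<in> (x, 1)\<close>, so
  \<open>g'(x) / g(x) < -1 / (1 - x) \<rightarrow> -\<infinity>\<close>, using \<open>g > 0\<close> on \<open>(0, 1)\<close>.
\<close>

lemma has_real_derivative_eq_0_if_constant_right:
  fixes f :: "real \<Rightarrow> real"
  assumes "(f has_real_derivative D) (at a)" and "\<And>x. a \<le> x \<Longrightarrow> f x = c"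
  shows "D = 0"
proof -
  have "((\<lambda>y. (f y - f a) / (y - a)) \<longlongrightarrow> D) (at_right a)"
    using has_field_derivative_at_within[OF assms(1), of "{a<..}"]
    by (simp add: has_field_derivative_iff)
  moreover have "((\<lambda>y. (f y - f a) / (y - a)) \<longlongrightarrow> 0) (at_right a)"
  proof (rule Lim_transform_eventually[OF tendsto_const])
    show "\<forall>\<^sub>F x in at_right a. 0 = (f x - f a) / (x - a)"
      by (rule eventually_at_rightI[where b = "a + 1"]) (auto simp: assms(2))
  qed
  ultimately show ?thesis
    using tendsto_unique[OF trivial_limit_at_right_real] by blast
qed

lemma higher_deriv_eq_0_if_vanishing_right:
  fixes f :: "real \<Rightarrow> real"
  assumes vanish: "\<And>x. a \<le> x \<Longrightarrow> f x = 0"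
    and diff: "\<And>k x. k < n \<Longrightarrow> a \<le> x \<Longrightarrow> (deriv ^^ k) f differentiable (at x)"
    and "k \<le> n" and "a \<le> x"
  shows "(deriv ^^ k) f x = 0"
  using assms(3,4)
proof (induction k arbitrary: x)
  case 0
  then show ?case using vanish by simp
next
  case (Suc k)
  have "((deriv ^^ k) f has_real_derivative (deriv ^^ Suc k) f x) (at x)"
    using diff[of k x] Suc.prems by (simp add: DERIV_deriv_iff_real_differentiable)
  then show ?case
  proof (rule has_real_derivative_eq_0_if_constant_right)
    show "(deriv ^^ k) f y = 0" if "x \<le> y" for y
      using Suc.IH Suc.prems that by simp
  qed
qed

lemma differentiable_transform_open:
  fixes f g :: "real \<Rightarrow> real"
  assumes "f differentiable (at x)" and "open S" "x \<in> S" and "\<And>y. y \<in> S \<Longrightarrow> f y = g y"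
  shows "g differentiable (at x)"
proof -
  obtain D where "(f has_real_derivative D) (at x)"
    using assms(1) real_differentiable_def by blast
  then have "(g has_real_derivative D) (at x)"
    using assms(2-4) by (rule has_field_derivative_transform_within_open)
  then show ?thesis
    using real_differentiable_def by blast
qed

lemma higher_differentiable_tan_comp:
  fixes h :: "real \<Rightarrow> real"
  assumes "open S"
    and cos_nonzero: "\<And>x. x \<in> S \<Longrightarrow> cos (h x) \<noteq> 0"
    and h_diff: "\<And>k x. k \<le> 2 \<Longrightarrow> x \<in> S \<Longrightarrow> (deriv ^^ k) h differentiable (at x)"
    and "k \<le> 2" and "x \<in> S"
  shows "(deriv ^^ k) (\<lambda>x. tan (h x)) differentiable (at x)"
proof -
  define g where "g = (\<lambda>x. tan (h x))"
  define G1 where "G1 x = deriv h x * (1 + (g x)\<^sup>2)" for x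
  define G2 where "G2 x = deriv (deriv h) x * (1 + (g x)\<^sup>2) + deriv h x * (2 * g x * G1 x)" for x
  have dh: "(h has_real_derivative deriv h y) (at y)"
    and dh1: "(deriv h has_real_derivative deriv (deriv h) y) (at y)"
    and dh2: "deriv (deriv h) differentiable (at y)" if "y \<in> S" for y
    using h_diff[OF _ that, of 0] h_diff[OF _ that, of 1] h_diff[OF _ that, of 2]
    by (simp_all add: DERIV_deriv_iff_real_differentiable numeral_2_eq_2)
  have dg: "(g has_real_derivative G1 y) (at y)" if "y \<in> S" for y
  proof -
    have "(g has_real_derivative inverse ((cos (h y))\<^sup>2) * deriv h y) (at y)"
      unfolding g_def by (rule DERIV_chain2[OF DERIV_tan[OF cos_nonzero[OF that]] dh[OF that]])
    moreover have "inverse ((cos (h y))\<^sup>2) = 1 + (g y)\<^sup>2"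
      using tan_sec[OF cos_nonzero[OF that]] by (simp add: g_def power_inverse)
    ultimately show ?thesis by (simp add: G1_def mult.commute)
  qed
  have dG1: "(G1 has_real_derivative G2 y) (at y)" if "y \<in> S" for y
    unfolding G1_def[abs_def] G2_def
    by (auto intro!: derivative_eq_intros dh1 dg that simp: G1_def)
  have deriv_g: "deriv g y = G1 y" if "y \<in> S" for y
    using dg[OF that] by (rule DERIV_imp_deriv)
  have deriv2_g: "(deriv ^^ 2) g y = G2 y" if "y \<in> S" for y
  proof -
    have "deriv (deriv g) y = deriv G1 y"
      using \<open>open S\<close> that deriv_g by (intro deriv_cong_ev eventually_nhds_in_open[THEN eventually_mono]) auto
    then show ?thesis using DERIV_imp_deriv[OF dG1[OF that]] by (simp add: numeral_2_eq_2)
  qed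
  have G1_diff: "G1 differentiable (at x)"
    using dG1[OF \<open>x \<in> S\<close>] by (auto simp: real_differentiable_def)
  have g_diff: "g differentiable (at x)"
    using dg[OF \<open>x \<in> S\<close>] by (auto simp: real_differentiable_def)
  have G2_diff: "G2 differentiable (at x)"
  proof -
    have "deriv h differentiable (at x)"
      using dh1[OF \<open>x \<in> S\<close>] by (auto simp: real_differentiable_def)
    then show ?thesis
      unfolding G2_def[abs_def] using G1_diff g_diff dh2[OF \<open>x \<in> S\<close>] by (intro derivative_intros)
  qed
  have "deriv g differentiable (at x)"
    using G1_diff \<open>open S\<close> \<open>x \<in> S\<close> by (rule differentiable_transform_open) (simp add: deriv_g)
  moreover have "(deriv ^^ 2) g differentiable (at x)"
    using G2_diff \<open>open S\<close> \<open>x \<in> S\<close> by (rule differentiable_transform_open) (simp add: deriv2_g)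
  moreover have "k = 0 \<or> k = 1 \<or> k = 2"
    using \<open>k \<le> 2\<close> by arith
  ultimately have "(deriv ^^ k) g differentiable (at x)"
    using g_diff by (elim disjE) simp_all
  then show ?thesis by (simp only: g_def)
qed

lemma deriv_signs_if_deriv3_neg:
  fixes f f' f'' f''' :: "real \<Rightarrow> real"
  assumes f: "\<And>t. a < t \<Longrightarrow> t \<le> b \<Longrightarrow> (f has_real_derivative f' t) (at t)"
    and f': "\<And>t. a < t \<Longrightarrow> t \<le> b \<Longrightarrow> (f' has_real_derivative f'' t) (at t)"
    and f'': "\<And>t. a < t \<Longrightarrow> t \<le> b \<Longrightarrow> (f'' has_real_derivative f''' t) (at t)"
    and zero: "f b = 0" "f' b = 0" "f'' b = 0"
    and f'''_neg: "\<And>t. a < t \<Longrightarrow> t < b \<Longrightarrow> f''' t < 0"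
    and "a < x" "x < b"
  shows "f'' x > 0" "f' x < 0" "f x < (b - x) * - f' x"
proof -
  have f''_pos: "f'' t > 0" if "a < t" "t < b" for t
  proof -
    have "f'' t > f'' b"
    proof (rule DERIV_neg_imp_decreasing_open[OF \<open>t < b\<close>])
      show "\<exists>y. (f'' has_real_derivative y) (at s) \<and> y < 0" if "t < s" "s < b" for s
        by (intro exI[of _ "f''' s"] conjI f'' f'''_neg) (use \<open>a < t\<close> that in auto)
      show "continuous_on {t..b} f''"
        by (rule DERIV_atLeastAtMost_imp_continuous_on, rule exI, rule f'') (use \<open>a < t\<close> in auto)
    qed
    then show ?thesis using zero by simp
  qed
  have f'_less: "f' s < f' t" if "a < s" "s < t" "t \<le> b" for s t
  proof (rule DERIV_pos_imp_increasing_open[OF \<open>s < t\<close>])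
    show "\<exists>y. (f' has_real_derivative y) (at r) \<and> y > 0" if "s < r" "r < t" for r
      by (intro exI[of _ "f'' r"] conjI f' f''_pos) (use \<open>a < s\<close> \<open>t \<le> b\<close> that in auto)
    show "continuous_on {s..t} f'"
      by (rule DERIV_atLeastAtMost_imp_continuous_on, rule exI, rule f') (use \<open>a < s\<close> \<open>t \<le> b\<close> in auto)
  qed
  show "f'' x > 0"
    using f''_pos \<open>a < x\<close> \<open>x < b\<close> .
  show "f' x < 0"
    using f'_less[OF \<open>a < x\<close> \<open>x < b\<close>] zero by simp
  have "\<exists>z>x. z < b \<and> f b - f x = (b - x) * f' z"
    by (rule MVT2[OF \<open>x < b\<close>], rule f) (use \<open>a < x\<close> in auto)
  then obtain z where z: "x < z" "z < b" "f b - f x = (b - x) * f' z"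
    by blast
  have "f x = (b - x) * - f' z"
    using z(3) zero(1) by linarith
  also have "\<dots> < (b - x) * - f' x"
    using f'_less[OF \<open>a < x\<close> \<open>x < z\<close>] z(2) \<open>x < b\<close> by simp
  finally show "f x < (b - x) * - f' x" .
qed

lemma filterlim_at_bot_mono:
  fixes f u :: "'a \<Rightarrow> 'b :: linorder"
  assumes "filterlim u at_bot F" and "eventually (\<lambda>x. f x \<le> u x) F"
  shows "filterlim f at_bot F"
  unfolding filterlim_at_bot
proof
  fix Z
  have "eventually (\<lambda>x. u x \<le> Z) F"
    using assms(1) by (simp add: filterlim_at_bot)
  with assms(2) show "eventually (\<lambda>x. f x \<le> Z) F"
    by eventually_elim (rule order_trans)
qed

lemma filterlim_log_deriv_at_bot_left:
  fixes f f' :: "real \<Rightarrow> real"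
  assumes "a < b" and bound: "\<And>x. a < x \<Longrightarrow> x < b \<Longrightarrow> 0 < f x \<and> f x < (b - x) * - f' x"
  shows "filterlim (\<lambda>x. f' x / f x) at_bot (at_left b)"
proof (rule filterlim_at_bot_mono)
  show "filterlim (\<lambda>x. -1 / (b - x)) at_bot (at_left b)"
    by real_asymp
  have "f' x / f x \<le> -1 / (b - x)" if "a < x" "x < b" for x
    using bound[OF that] that by (simp add: field_simps)
  then show "\<forall>\<^sub>F x in at_left b. f' x / f x \<le> -1 / (b - x)"
    by (rule eventually_at_leftI[OF _ \<open>a < b\<close>]) auto
qed

theorem mainTheorem3:
  fixes h g :: "real \<Rightarrow> real"
  assumes smooth: "smooth_real h"
    and h_neg: "\<And>T. T \<le> 0 \<Longrightarrow> h T = pi / 2"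
    and h_mid: "\<And>T. 0 < T \<Longrightarrow> T < 1 \<Longrightarrow> 0 < h T \<and> h T < pi / 2"
    and h_pos: "\<And>T. T \<ge> 1 \<Longrightarrow> h T = 0"
    and g_def: "g = (\<lambda>x. tan (h x))"
    and g3: "\<And>x. 0 < x \<Longrightarrow> x < 1 \<Longrightarrow> (deriv ^^ 3) g x < 0"
  shows "(\<forall>x. 0 < x \<and> x < 1 \<longrightarrow> (deriv ^^ 2) g x > 0 \<and> deriv g x < 0)
         \<and> filterlim (\<lambda>x. deriv g x / g x) at_bot (at_left 1)"
proof -
  have cos_nonzero: "cos (h x) \<noteq> 0" if "x \<in> {0<..}" for x
    using that h_mid[of x] h_pos[of x] cos_gt_zero_pi[of "h x"] by (cases "x < 1") auto
  have g_diff: "(deriv ^^ k) g differentiable (at x)" if "k \<le> 2" "0 < x" for k x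
    unfolding g_def using that smooth cos_nonzero
    by (intro higher_differentiable_tan_comp[of "{0<..}"]) (auto simp: smooth_real_def)
  have d: "(g has_real_derivative deriv g x) (at x)"
    "(deriv g has_real_derivative (deriv ^^ 2) g x) (at x)"
    "((deriv ^^ 2) g has_real_derivative (deriv ^^ 3) g x) (at x)" if "0 < x" for x
    using g_diff[of 0 x] g_diff[of 1 x] g_diff[of 2 x] that
    by (simp_all add: DERIV_deriv_iff_real_differentiable numeral_3_eq_3 numeral_2_eq_2)
  have vanish: "(deriv ^^ k) g x = 0" if "k \<le> 2" "1 \<le> x" for k x
    using that g_diff h_pos by (intro higher_deriv_eq_0_if_vanishing_right[of 1 g 2]) (auto simp: g_def)
  have zero: "g 1 = 0" "deriv g 1 = 0" "(deriv ^^ 2) g 1 = 0"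
    using vanish[of 0 1] vanish[of 1 1] vanish[of 2 1] by simp_all
  have g_pos: "g x > 0" if "0 < x" "x < 1" for x
    using h_mid[OF that] by (simp add: g_def tan_gt_zero)
  have signs: "(deriv ^^ 2) g x > 0 \<and> deriv g x < 0 \<and> g x < (1 - x) * - deriv g x"
    if "0 < x" "x < 1" for x
    using deriv_signs_if_deriv3_neg[of 0 1 g "deriv g" "(deriv ^^ 2) g" "(deriv ^^ 3) g" x]
      d zero g3 that by auto
  then show ?thesis
    using filterlim_log_deriv_at_bot_left[of 0 1 g "deriv g"] g_pos by auto
qed

end
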